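(* Suppose $X=\bigsqcup_n X_n$ is a weak expander. Then there exist $R>0$ and $\kappa>0$ such that for every $S>0$ there exists $N$ such that for every $n\ge N$ and every $\xi\in\ell^2(X_n)$ with $\|\xi\|=1$ and support contained in a ball of radius $S$, one has $\langle\Delta_R\xi,\xi\rangle\ge\kappa$.
   Context: Let $(X_n)$ be a sequence of non-empty finite metric spaces and $X=\bigsqcup_n X_n$ their disjoint union, equipped with a metric restricting to the given metric on each $X_n$ and such that $d(X_n,X_m)>\operatorname{diam}(X_n)+\operatorname{diam}(X_m)$ for $n\neq m$; assume $X$ has bounded geometry (for each $R>0$ there is a uniform bound on the number of points in balls of radius $R$). For $R>0$ let $E_n^R=\{(x,y)\in X_n\times X_n: d(x,y)\le R\}$. $X$ is a weak expander if there exist $c,R>0$ such that for every $S>0$ there exists $N$ such that for all $n\ge N$ and all $\phi:X_n\to\mathbb{R}$ supported in a ball of radius $S$, $\sum_{(x,y)\in E_n^R}|\phi(x)-\phi(y)|\ge c\sum_{x\in X_n}|\phi(x)|$. The Laplacian at scale $R$ is the bounded operator $\Delta_R$ on $\ell^2(X)$ given on the standard basis by $\Delta_R\delta_x=\sum_{y:\,d(x,y)\le R}(\delta_x-\delta_y)$; it satisfies $\langle\Delta_R\xi,\xi\rangle=\tfrac12\sum_{d(x,y)\le R}|\xi(x)-\xi(y)|^2$. Here $\ell^2(X_n)$ is regarded as a subspace of $\ell^2(X)$. *)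

theory Defs
  imports "HOL-Analysis.Analysis"
begin

text \<open>The space X is the union of the pieces Xs n, sitting inside a metric space type 'a.
  Functions on X (resp. on X_n) are represented as functions 'a => real; only their values
  on X (resp. X_n) matter.\<close>

definition coarse_disjoint_union :: "(nat \<Rightarrow> 'a::metric_space set) \<Rightarrow> bool" where
  "coarse_disjoint_union Xs \<longleftrightarrow>
     (\<forall>n. finite (Xs n) \<and> Xs n \<noteq> {}) \<and>
     (\<forall>n m. n \<noteq> m \<longrightarrow> Xs n \<inter> Xs m = {}) \<and>
     (\<forall>n m. n \<noteq> m \<longrightarrow> setdist (Xs n) (Xs m) > diameter (Xs n) + diameter (Xs m))"

definition bounded_geometry :: "'a::metric_space set \<Rightarrow> bool" where
  "bounded_geometry X \<longleftrightarrow>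
     (\<forall>R>0. \<exists>K::nat. \<forall>x\<in>X. finite {y\<in>X. dist x y \<le> R} \<and> card {y\<in>X. dist x y \<le> R} \<le> K)"

definition edges :: "'a::metric_space set \<Rightarrow> real \<Rightarrow> ('a \<times> 'a) set" where
  "edges A R = {(x,y) \<in> A \<times> A. dist x y \<le> R}"

definition supp_in_ball :: "'a::metric_space set \<Rightarrow> ('a \<Rightarrow> real) \<Rightarrow> real \<Rightarrow> bool" where
  "supp_in_ball A \<phi> S \<longleftrightarrow> (\<exists>x0\<in>A. \<forall>x\<in>A. \<phi> x \<noteq> 0 \<longrightarrow> dist x0 x \<le> S)"

definition weak_expander :: "(nat \<Rightarrow> 'a::metric_space set) \<Rightarrow> bool" where
  "weak_expander Xs \<longleftrightarrow>
     (\<exists>c>0. \<exists>R>0. \<forall>S>0. \<exists>N. \<forall>n\<ge>N. \<forall>\<phi>::'a \<Rightarrow> real.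
        supp_in_ball (Xs n) \<phi> S \<longrightarrow>
        (\<Sum>(x,y)\<in>edges (Xs n) R. \<bar>\<phi> x - \<phi> y\<bar>) \<ge> c * (\<Sum>x\<in>Xs n. \<bar>\<phi> x\<bar>))"

text \<open>The Laplacian at scale R on X, applied to a finitely supported function xi:
  (Delta_R xi)(z) = sum over y in X with d(z,y) <= R of (xi z - xi y),
  which is the operator with Delta_R delta_x = sum_{d(x,y)<=R} (delta_x - delta_y).\<close>
definition laplacian :: "'a::metric_space set \<Rightarrow> real \<Rightarrow> ('a \<Rightarrow> real) \<Rightarrow> 'a \<Rightarrow> real" where
  "laplacian X R \<xi> z = (\<Sum>y\<in>{y\<in>X. dist z y \<le> R}. \<xi> z - \<xi> y)"

definition l2_inner :: "'a set \<Rightarrow> ('a \<Rightarrow> real) \<Rightarrow> ('a \<Rightarrow> real) \<Rightarrow> real" where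
  "l2_inner X \<xi> \<eta> = (\<Sum>x\<in>{x\<in>X. \<xi> x \<noteq> 0 \<and> \<eta> x \<noteq> 0}. \<xi> x * \<eta> x)"

definition l2_norm :: "'a set \<Rightarrow> ('a \<Rightarrow> real) \<Rightarrow> real" where
  "l2_norm X \<xi> = sqrt (\<Sum>x\<in>{x\<in>X. \<xi> x \<noteq> 0}. (\<xi> x)\<^sup>2)"

end

theory Submission
  imports Defs
begin

text \<open>Apply the weak expander inequality to \<open>\<phi> = \<xi>\<^sup>2\<close>, which is supported in a ball of radius
  \<open>2 S\<close>. Factoring \<open>\<bar>\<xi>(x)\<^sup>2 - \<xi>(y)\<^sup>2\<bar> = \<bar>\<xi>(x) - \<xi>(y)\<bar> \<bar>\<xi>(x) + \<xi>(y)\<bar>\<close> and using Cauchy-Schwarz gives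
  \<open>c\<^sup>2 \<le> (\<Sum>\<^sub>E (\<xi>(x) - \<xi>(y))\<^sup>2) (\<Sum>\<^sub>E (\<xi>(x) + \<xi>(y))\<^sup>2)\<close>; bounded geometry bounds the second factor
  by \<open>4 K\<close>, and the first factor is twice the Dirichlet energy, which is at most
  \<open>\<langle>\<Delta>\<^sub>R \<xi>, \<xi>\<rangle>\<close>. Hence \<open>\<kappa> = c\<^sup>2 / (8 K)\<close> works.\<close>

lemma edges_eq_Sigma: "edges A R = (SIGMA x:A. {y\<in>A. dist x y \<le> R})"
  by (auto simp: edges_def)

lemma sum_edges_swap:
  "(\<Sum>(x,y)\<in>edges A R. f x y) = (\<Sum>(x,y)\<in>edges A R. f y x)"
  by (rule sum.reindex_bij_witness[where i=prod.swap and j=prod.swap])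
     (auto simp: edges_def dist_commute)

definition dirichlet_energy :: "'a::metric_space set \<Rightarrow> real \<Rightarrow> ('a \<Rightarrow> real) \<Rightarrow> real" where
  "dirichlet_energy A R \<xi> = (\<Sum>(x,y)\<in>edges A R. (\<xi> x - \<xi> y)\<^sup>2) / 2"

lemma dirichlet_energy_nonneg: "0 \<le> dirichlet_energy A R \<xi>"
  unfolding dirichlet_energy_def by (auto intro: sum_nonneg)

lemma sum_edges_diff_mult_eq_dirichlet_energy:
  "(\<Sum>(x,y)\<in>edges A R. (\<xi> x - \<xi> y) * \<xi> x) = dirichlet_energy A R \<xi>"
proof -
  have "2 * (\<Sum>(x,y)\<in>edges A R. (\<xi> x - \<xi> y) * \<xi> x) =
        (\<Sum>(x,y)\<in>edges A R. (\<xi> x - \<xi> y) * \<xi> x) + (\<Sum>(x,y)\<in>edges A R. (\<xi> y - \<xi> x) * \<xi> y)"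
    using sum_edges_swap[of "\<lambda>x y. (\<xi> x - \<xi> y) * \<xi> x"] by simp
  also have "\<dots> = (\<Sum>(x,y)\<in>edges A R. (\<xi> x - \<xi> y)\<^sup>2)"
    by (simp add: sum.distrib[symmetric] case_prod_unfold power2_eq_square algebra_simps)
  finally show ?thesis unfolding dirichlet_energy_def by simp
qed

lemma sum_edges_square_le:
  fixes K :: real
  assumes "finite A" and card_le: "\<And>x. x \<in> A \<Longrightarrow> card {y\<in>A. dist x y \<le> R} \<le> K"
  shows "(\<Sum>(x,y)\<in>edges A R. (\<xi> x)\<^sup>2) \<le> K * (\<Sum>x\<in>A. (\<xi> x)\<^sup>2)"
proof -
  have "(\<Sum>(x,y)\<in>edges A R. (\<xi> x)\<^sup>2) = (\<Sum>x\<in>A. card {y\<in>A. dist x y \<le> R} * (\<xi> x)\<^sup>2)"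
    unfolding edges_eq_Sigma using \<open>finite A\<close> by (subst sum.Sigma[symmetric]) auto
  also have "\<dots> \<le> (\<Sum>x\<in>A. K * (\<xi> x)\<^sup>2)"
    by (rule sum_mono) (simp add: card_le mult_right_mono)
  finally show ?thesis by (simp add: sum_distrib_left)
qed

lemma sum_edges_plus_square_le:
  fixes K :: real
  assumes "finite A" and "\<And>x. x \<in> A \<Longrightarrow> card {y\<in>A. dist x y \<le> R} \<le> K"
  shows "(\<Sum>(x,y)\<in>edges A R. (\<xi> x + \<xi> y)\<^sup>2) \<le> 4 * K * (\<Sum>x\<in>A. (\<xi> x)\<^sup>2)"
proof -
  have "(a + b)\<^sup>2 \<le> 2 * a\<^sup>2 + 2 * b\<^sup>2" for a b :: real
    using zero_le_power2[of "a - b"] by (simp add: power2_eq_square algebra_simps)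
  then have "(\<Sum>(x,y)\<in>edges A R. (\<xi> x + \<xi> y)\<^sup>2) \<le> (\<Sum>(x,y)\<in>edges A R. 2 * (\<xi> x)\<^sup>2 + 2 * (\<xi> y)\<^sup>2)"
    by (intro sum_mono) (simp add: case_prod_unfold)
  also have "\<dots> = 4 * (\<Sum>(x,y)\<in>edges A R. (\<xi> x)\<^sup>2)"
    using sum_edges_swap[of "\<lambda>x y. (\<xi> x)\<^sup>2"]
    by (simp add: sum.distrib case_prod_unfold flip: sum_distrib_left)
  also have "\<dots> \<le> 4 * K * (\<Sum>x\<in>A. (\<xi> x)\<^sup>2)"
    using sum_edges_square_le[OF assms] by simp
  finally show ?thesis .
qed

lemma sum_edges_abs_diff_squares_le:
  "(\<Sum>(x,y)\<in>edges A R. \<bar>(\<xi> x)\<^sup>2 - (\<xi> y)\<^sup>2\<bar>)\<^sup>2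
     \<le> 2 * dirichlet_energy A R \<xi> * (\<Sum>(x,y)\<in>edges A R. (\<xi> x + \<xi> y)\<^sup>2)"
  using Cauchy_Schwarz_ineq_sum[of "\<lambda>(x,y). \<bar>\<xi> x - \<xi> y\<bar>" "\<lambda>(x,y). \<bar>\<xi> x + \<xi> y\<bar>" "edges A R"]
  by (simp add: dirichlet_energy_def case_prod_unfold power2_eq_square abs_mult[symmetric] algebra_simps)

lemma dirichlet_energy_ge:
  fixes K c :: real
  assumes "finite A" and card_le: "\<And>x. x \<in> A \<Longrightarrow> card {y\<in>A. dist x y \<le> R} \<le> K"
    and "K > 0" "c \<ge> 0"
    and l1_bound: "c * (\<Sum>x\<in>A. (\<xi> x)\<^sup>2) \<le> (\<Sum>(x,y)\<in>edges A R. \<bar>(\<xi> x)\<^sup>2 - (\<xi> y)\<^sup>2\<bar>)"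
  shows "c\<^sup>2 / (8 * K) * (\<Sum>x\<in>A. (\<xi> x)\<^sup>2) \<le> dirichlet_energy A R \<xi>"
proof -
  define s where "s = (\<Sum>x\<in>A. (\<xi> x)\<^sup>2)"
  define E where "E = dirichlet_energy A R \<xi>"
  have "s \<ge> 0" "E \<ge> 0"
    unfolding s_def E_def by (auto intro: sum_nonneg dirichlet_energy_nonneg)
  have "(c * s)\<^sup>2 \<le> (\<Sum>(x,y)\<in>edges A R. \<bar>(\<xi> x)\<^sup>2 - (\<xi> y)\<^sup>2\<bar>)\<^sup>2"
    using l1_bound \<open>c \<ge> 0\<close> \<open>s \<ge> 0\<close> unfolding s_def by (intro power_mono) auto
  also have "\<dots> \<le> 2 * E * (\<Sum>(x,y)\<in>edges A R. (\<xi> x + \<xi> y)\<^sup>2)"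
    unfolding E_def by (rule sum_edges_abs_diff_squares_le)
  also have "\<dots> \<le> 2 * E * (4 * K * s)"
    using sum_edges_plus_square_le[OF \<open>finite A\<close> card_le] \<open>E \<ge> 0\<close>
    unfolding s_def by (intro mult_left_mono) auto
  finally have "s * (c\<^sup>2 * s) \<le> s * (8 * K * E)"
    by (simp add: power_mult_distrib power2_eq_square algebra_simps)
  then have "c\<^sup>2 * s \<le> 8 * K * E \<or> s = 0"
    using \<open>s \<ge> 0\<close> by (auto simp: mult_le_cancel_left)
  then show ?thesis
    using \<open>K > 0\<close> \<open>E \<ge> 0\<close> unfolding s_def[symmetric] E_def[symmetric]
    by (auto simp: field_simps)
qed

lemma l2_inner_eq_sum_support:
  assumes "finite A" "A \<subseteq> X" "\<And>x. x \<notin> A \<Longrightarrow> \<eta> x = 0"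
  shows "l2_inner X \<xi> \<eta> = (\<Sum>x\<in>A. \<xi> x * \<eta> x)"
  unfolding l2_inner_def by (rule sum.mono_neutral_left) (use assms in auto)

lemma l2_norm_eq_sum_support:
  assumes "finite A" "A \<subseteq> X" "\<And>x. x \<notin> A \<Longrightarrow> \<xi> x = 0"
  shows "l2_norm X \<xi> = sqrt (\<Sum>x\<in>A. (\<xi> x)\<^sup>2)"
  unfolding l2_norm_def by (subst sum.mono_neutral_left[of A]) (use assms in auto)

text \<open>Edges leaving A only add the nonnegative terms \<open>\<xi>(x)\<^sup>2\<close>, so the energy of \<open>\<xi>\<close> in X
  dominates its energy inside A.\<close>
lemma dirichlet_energy_le_l2_inner_laplacian:
  assumes "finite A" "A \<subseteq> X" and vanish: "\<And>x. x \<notin> A \<Longrightarrow> \<xi> x = 0"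
    and finite_balls: "\<And>x. x \<in> A \<Longrightarrow> finite {y\<in>X. dist x y \<le> R}"
  shows "dirichlet_energy A R \<xi> \<le> l2_inner X (laplacian X R \<xi>) \<xi>"
proof -
  have local_ge: "(\<Sum>y\<in>{y\<in>A. dist x y \<le> R}. (\<xi> x - \<xi> y) * \<xi> x) \<le> laplacian X R \<xi> x * \<xi> x"
    if "x \<in> A" for x
  proof -
    have "(\<Sum>y\<in>{y\<in>A. dist x y \<le> R}. (\<xi> x - \<xi> y) * \<xi> x) \<le> (\<Sum>y\<in>{y\<in>X. dist x y \<le> R}. (\<xi> x - \<xi> y) * \<xi> x)"
      using \<open>A \<subseteq> X\<close> finite_balls[OF that] vanish
      by (intro sum_mono2) (auto simp: power2_eq_square[symmetric])
    then show ?thesis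
      by (simp add: laplacian_def sum_distrib_right)
  qed
  have "dirichlet_energy A R \<xi> = (\<Sum>x\<in>A. \<Sum>y\<in>{y\<in>A. dist x y \<le> R}. (\<xi> x - \<xi> y) * \<xi> x)"
    unfolding sum_edges_diff_mult_eq_dirichlet_energy[symmetric] edges_eq_Sigma
    using \<open>finite A\<close> by (subst sum.Sigma) auto
  also have "\<dots> \<le> (\<Sum>x\<in>A. laplacian X R \<xi> x * \<xi> x)"
    by (rule sum_mono) (rule local_ge)
  also have "\<dots> = l2_inner X (laplacian X R \<xi>) \<xi>"
    using assms by (simp add: l2_inner_eq_sum_support)
  finally show ?thesis .
qed

lemma supp_in_ball_subset_double:
  assumes "supp_in_ball X \<phi> S" "A \<subseteq> X" "x1 \<in> A" "\<phi> x1 \<noteq> 0"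
  shows "supp_in_ball A \<phi> (2 * S)"
proof -
  obtain x0 where x0: "\<And>x. x \<in> X \<Longrightarrow> \<phi> x \<noteq> 0 \<Longrightarrow> dist x0 x \<le> S"
    using assms(1) unfolding supp_in_ball_def by blast
  have "dist x1 x \<le> 2 * S" if "x \<in> A" "\<phi> x \<noteq> 0" for x
  proof -
    have "x \<in> X" "x1 \<in> X" using assms that by auto
    then show ?thesis
      using x0[of x] x0[of x1] assms that dist_triangle[of x1 x x0] by (simp add: dist_commute)
  qed
  then show ?thesis
    unfolding supp_in_ball_def using \<open>x1 \<in> A\<close> by blast
qed

lemma l2_inner_laplacian_ge_of_expansion:
  fixes K c :: real
  assumes "finite A" "A \<subseteq> X"
    and balls: "\<And>x. x \<in> A \<Longrightarrow> finite {y\<in>X. dist x y \<le> R} \<and> card {y\<in>X. dist x y \<le> R} \<le> K"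
    and "K > 0" "c > 0"
    and expansion: "\<And>\<phi>. supp_in_ball A \<phi> (2 * S) \<Longrightarrow>
          c * (\<Sum>x\<in>A. \<bar>\<phi> x\<bar>) \<le> (\<Sum>(x,y)\<in>edges A R. \<bar>\<phi> x - \<phi> y\<bar>)"
    and vanish: "\<And>x. x \<notin> A \<Longrightarrow> \<xi> x = 0" and "l2_norm X \<xi> = 1" and "supp_in_ball X \<xi> S"
  shows "c\<^sup>2 / (8 * K) \<le> l2_inner X (laplacian X R \<xi>) \<xi>"
proof -
  have card_le: "card {y\<in>A. dist x y \<le> R} \<le> K" if "x \<in> A" for x
    using balls[OF that] card_mono[of "{y\<in>X. dist x y \<le> R}" "{y\<in>A. dist x y \<le> R}"] \<open>A \<subseteq> X\<close>
    by force
  have unit: "(\<Sum>x\<in>A. (\<xi> x)\<^sup>2) = 1"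
    using \<open>l2_norm X \<xi> = 1\<close> l2_norm_eq_sum_support[OF \<open>finite A\<close> \<open>A \<subseteq> X\<close> vanish] by simp
  then obtain x1 where "x1 \<in> A" "\<xi> x1 \<noteq> 0"
    by (metis (mono_tags, lifting) power_zero_numeral sum.neutral zero_neq_one)
  then have "supp_in_ball A (\<lambda>x. (\<xi> x)\<^sup>2) (2 * S)"
    using \<open>supp_in_ball X \<xi> S\<close> \<open>A \<subseteq> X\<close>
    by (intro supp_in_ball_subset_double[of X]) (auto simp: supp_in_ball_def)
  from expansion[OF this]
  have "c * (\<Sum>x\<in>A. (\<xi> x)\<^sup>2) \<le> (\<Sum>(x,y)\<in>edges A R. \<bar>(\<xi> x)\<^sup>2 - (\<xi> y)\<^sup>2\<bar>)"
    by simp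
  from dirichlet_energy_ge[OF \<open>finite A\<close> card_le _ _ this]
  have "c\<^sup>2 / (8 * K) \<le> dirichlet_energy A R \<xi>"
    using \<open>K > 0\<close> \<open>c > 0\<close> unit by simp
  also have "\<dots> \<le> l2_inner X (laplacian X R \<xi>) \<xi>"
    using assms by (intro dirichlet_energy_le_l2_inner_laplacian) auto
  finally show ?thesis .
qed

theorem lemma3p2:
  fixes Xs :: "nat \<Rightarrow> 'a::metric_space set"
  defines "X \<equiv> (\<Union>n. Xs n)"
  assumes "coarse_disjoint_union Xs"
    and "bounded_geometry X"
    and "weak_expander Xs"
  shows "\<exists>R>0. \<exists>\<kappa>>0. \<forall>S>0. \<exists>N. \<forall>n\<ge>N. \<forall>\<xi>::'a \<Rightarrow> real.
           (\<forall>x. x \<notin> Xs n \<longrightarrow> \<xi> x = 0) \<longrightarrow> l2_norm X \<xi> = 1 \<longrightarrow> supp_in_ball X \<xi> S \<longrightarrow>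
           l2_inner X (laplacian X R \<xi>) \<xi> \<ge> \<kappa>"
proof -
  obtain c R where "c > 0" "R > 0" and expander: "\<forall>S>0. \<exists>N. \<forall>n\<ge>N. \<forall>\<phi>::'a \<Rightarrow> real.
        supp_in_ball (Xs n) \<phi> S \<longrightarrow>
        (\<Sum>(x,y)\<in>edges (Xs n) R. \<bar>\<phi> x - \<phi> y\<bar>) \<ge> c * (\<Sum>x\<in>Xs n. \<bar>\<phi> x\<bar>)"
    using assms(4) unfolding weak_expander_def by blast
  obtain K :: nat where K: "\<forall>x\<in>X. finite {y\<in>X. dist x y \<le> R} \<and> card {y\<in>X. dist x y \<le> R} \<le> K"
    using assms(3) \<open>R > 0\<close> unfolding bounded_geometry_def by blast
  have pieces: "finite (Xs n)" "Xs n \<subseteq> X" for n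
    using assms(2) unfolding coarse_disjoint_union_def X_def by blast+
  define \<kappa> where "\<kappa> = c\<^sup>2 / (8 * (real K + 1))"
  have "\<exists>N. \<forall>n\<ge>N. \<forall>\<xi>::'a \<Rightarrow> real.
           (\<forall>x. x \<notin> Xs n \<longrightarrow> \<xi> x = 0) \<longrightarrow> l2_norm X \<xi> = 1 \<longrightarrow> supp_in_ball X \<xi> S \<longrightarrow>
           l2_inner X (laplacian X R \<xi>) \<xi> \<ge> \<kappa>" if "S > 0" for S
  proof -
    obtain N where N: "\<forall>n\<ge>N. \<forall>\<phi>::'a \<Rightarrow> real. supp_in_ball (Xs n) \<phi> (2 * S) \<longrightarrow>
          (\<Sum>(x,y)\<in>edges (Xs n) R. \<bar>\<phi> x - \<phi> y\<bar>) \<ge> c * (\<Sum>x\<in>Xs n. \<bar>\<phi> x\<bar>)"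
      using expander \<open>S > 0\<close> by (meson mult_pos_pos zero_less_numeral)
    have "\<kappa> \<le> l2_inner X (laplacian X R \<xi>) \<xi>"
      if "n \<ge> N" "\<forall>x. x \<notin> Xs n \<longrightarrow> \<xi> x = 0" "l2_norm X \<xi> = 1" "supp_in_ball X \<xi> S" for n \<xi>
      unfolding \<kappa>_def
    proof (rule l2_inner_laplacian_ge_of_expansion[OF pieces])
      show "\<And>x. x \<in> Xs n \<Longrightarrow> finite {y\<in>X. dist x y \<le> R} \<and> card {y\<in>X. dist x y \<le> R} \<le> real K + 1"
        using K pieces(2) by fastforce
      show "\<And>\<phi>. supp_in_ball (Xs n) \<phi> (2 * S) \<Longrightarrow>
          c * (\<Sum>x\<in>Xs n. \<bar>\<phi> x\<bar>) \<le> (\<Sum>(x,y)\<in>edges (Xs n) R. \<bar>\<phi> x - \<phi> y\<bar>)"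
        using N \<open>n \<ge> N\<close> by blast
    qed (use that \<open>c > 0\<close> in auto)
    then show ?thesis by blast
  qed
  moreover have "\<kappa> > 0"
    using \<open>c > 0\<close> by (simp add: \<kappa>_def)
  ultimately show ?thesis
    using \<open>R > 0\<close> by blast
qed

end
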